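(* Let $f_1,\dots,f_k \in \mathbb{K}[\bm{x}]$ be multihomogeneous polynomials, let $\bm{d} \in \mathbb{Z}^r$ and let $<$ be a monomial order. If $[H_1^s]_{\bm{d}} = 0$ for all $s \leq k$, then the Macaulay matrix $\mathcal{M}^k_{\bm{d}}$ (the output of the algorithm $\texttt{M}_3\texttt{H}(\{f_1,\dots,f_k\},\bm{d},<)$ described below) is full-rank.
   Context: $\mathbb{K}$ is a field of characteristic 0. For $n_1,\dots,n_r \in \mathbb{N}$, $\mathbb{K}[\bm{x}] := \bigotimes_{i=1}^r \mathbb{K}[x_{i,0},\dots,x_{i,n_i}]$ is the multihomogeneous $\mathbb{K}$-algebra multigraded by $\mathbb{Z}^r$, with $\mathbb{K}[\bm{x}]_{\bm{d}} := \bigotimes_{i=1}^r \mathbb{K}[x_{i,0},\dots,x_{i,n_i}]_{d_i}$; for a module $\mathrm{M}$, $[\mathrm{M}]_{\bm{d}}$ denotes its graded part of multidegree $\bm{d}$. For $s \le k$, $H_1^s := H_1(\mathcal{K}_\bullet(f_1,\dots,f_s;\mathbb{K}[\bm{x}]))$ is the first homology module of the Koszul complex of $f_1,\dots,f_s$ over $\mathbb{K}[\bm{x}]$. A Macaulay matrix is a matrix whose columns are indexed by monomials and whose rows are indexed by polynomials, the entry at (monomial $m$, polynomial $f$) being the coefficient of $m$ in $f$. The matrix $\mathcal{M}^k_{\bm{d}} = \texttt{M}_3\texttt{H}(\{f_1,\dots,f_k\},\bm{d},<)$ is defined recursively: if $k=1$, start with the Macaulay matrix with columns indexed by the monomials of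 $\mathbb{K}[\bm{x}]_{\bm{d}}$ in decreasing order w.r.t. $<$ and no rows, and set $\mathfrak{L}=\emptyset$; if $k>1$, start with $\mathcal{M}^{k-1}_{\bm{d}} = \texttt{M}_3\texttt{H}(\{f_1,\dots,f_{k-1}\},\bm{d},<)$ and let $\mathfrak{L}$ be the set of leading monomials of the rows of the Gaussian elimination of $\texttt{M}_3\texttt{H}(\{f_1,\dots,f_{k-1}\},\bm{d}-\deg(f_k),<)$. Then, for every monomial $\bm{x}^\beta \in \mathbb{K}[\bm{x}]_{\bm{d}-\deg(f_k)}$ with $\bm{x}^\beta \notin \mathfrak{L}$, add the row $\bm{x}^\beta \cdot f_k$. *)

theory Defs
  imports "HOL-Library.Poly_Mapping" "Jordan_Normal_Form.Gauss_Jordan_Elimination"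
          "Jordan_Normal_Form.DL_Rank"
begin

(* Variables x_{i,j} are encoded as pairs (i,j) with i < r and j \<le> n i. *)
type_synonym mono = "(nat \<times> nat) \<Rightarrow>\<^sub>0 nat"
type_synonym 'a mpoly = "mono \<Rightarrow>\<^sub>0 'a"

definition vars :: "(nat \<Rightarrow> nat) \<Rightarrow> nat \<Rightarrow> (nat \<times> nat) set" where
  "vars n r = {(i, j). i < r \<and> j \<le> n i}"

definition is_mono :: "(nat \<Rightarrow> nat) \<Rightarrow> nat \<Rightarrow> mono \<Rightarrow> bool" where
  "is_mono n r m \<longleftrightarrow> Poly_Mapping.keys m \<subseteq> vars n r"

(* multidegree of a monomial, a vector in Z^r (only indices i < r matter) *)
definition mdeg :: "(nat \<Rightarrow> nat) \<Rightarrow> mono \<Rightarrow> nat \<Rightarrow> int" where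
  "mdeg n m i = int (\<Sum>j\<le>n i. Poly_Mapping.lookup m (i, j))"

definition Mon :: "(nat \<Rightarrow> nat) \<Rightarrow> nat \<Rightarrow> (nat \<Rightarrow> int) \<Rightarrow> mono set" where
  "Mon n r e = {m. is_mono n r m \<and> (\<forall>i<r. mdeg n m i = e i)}"

definition homog :: "(nat \<Rightarrow> nat) \<Rightarrow> nat \<Rightarrow> (nat \<Rightarrow> int) \<Rightarrow> 'a::zero mpoly \<Rightarrow> bool" where
  "homog n r e p \<longleftrightarrow> Poly_Mapping.keys p \<subseteq> Mon n r e"

definition monomial_order :: "(nat \<Rightarrow> nat) \<Rightarrow> nat \<Rightarrow> (mono \<Rightarrow> mono \<Rightarrow> bool) \<Rightarrow> bool" where
  "monomial_order n r lt \<longleftrightarrow>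
     (\<forall>a. is_mono n r a \<longrightarrow> \<not> lt a a) \<and>
     (\<forall>a b c. is_mono n r a \<longrightarrow> is_mono n r b \<longrightarrow> is_mono n r c \<longrightarrow> lt a b \<longrightarrow> lt b c \<longrightarrow> lt a c) \<and>
     (\<forall>a b. is_mono n r a \<longrightarrow> is_mono n r b \<longrightarrow> a \<noteq> b \<longrightarrow> lt a b \<or> lt b a) \<and>
     (\<forall>a b c. is_mono n r a \<longrightarrow> is_mono n r b \<longrightarrow> is_mono n r c \<longrightarrow> lt a b \<longrightarrow> lt (a + c) (b + c)) \<and>
     (\<forall>a. is_mono n r a \<longrightarrow> a \<noteq> 0 \<longrightarrow> lt 0 a)"

definition dec_list :: "(mono \<Rightarrow> mono \<Rightarrow> bool) \<Rightarrow> mono set \<Rightarrow> mono list" where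
  "dec_list lt S = (THE xs. set xs = S \<and> sorted_wrt (\<lambda>a b. lt b a) xs)"

definition macaulay :: "mono list \<Rightarrow> 'a::field mpoly list \<Rightarrow> 'a mat" where
  "macaulay ms ps = mat (length ps) (length ms) (\<lambda>(i, j). Poly_Mapping.lookup (ps ! i) (ms ! j))"

definition lead_monos_ge :: "mono list \<Rightarrow> 'a::field mat \<Rightarrow> mono set" where
  "lead_monos_ge ms A =
     (let G = gauss_jordan_single A in
      {ms ! j | i j. i < dim_row G \<and> j < dim_col G \<and> G $$ (i, j) \<noteq> 0 \<and>
                     (\<forall>j' < j. G $$ (i, j') = 0)})"

(* rows of M3H({f_1,...,f_k}, e, lt); degree of f_s is D s *)
fun m3h_rows :: "(nat \<Rightarrow> nat) \<Rightarrow> nat \<Rightarrow> (mono \<Rightarrow> mono \<Rightarrow> bool) \<Rightarrow> (nat \<Rightarrow> 'a::field mpoly)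
    \<Rightarrow> (nat \<Rightarrow> nat \<Rightarrow> int) \<Rightarrow> nat \<Rightarrow> (nat \<Rightarrow> int) \<Rightarrow> 'a mpoly list" where
  "m3h_rows n r lt f D 0 e = []"
| "m3h_rows n r lt f D (Suc k) e =
     (let e' = (\<lambda>i. e i - D (Suc k) i);
          ms' = dec_list lt (Mon n r e');
          L = lead_monos_ge ms' (macaulay ms' (m3h_rows n r lt f D k e'))
      in m3h_rows n r lt f D k e @
         map (\<lambda>\<beta>. Poly_Mapping.single \<beta> 1 * f (Suc k))
             (filter (\<lambda>\<beta>. \<beta> \<notin> L) (dec_list lt (Mon n r e'))))"

definition M3H :: "(nat \<Rightarrow> nat) \<Rightarrow> nat \<Rightarrow> (mono \<Rightarrow> mono \<Rightarrow> bool) \<Rightarrow> (nat \<Rightarrow> 'a::field mpoly)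
    \<Rightarrow> (nat \<Rightarrow> nat \<Rightarrow> int) \<Rightarrow> nat \<Rightarrow> (nat \<Rightarrow> int) \<Rightarrow> 'a mat" where
  "M3H n r lt f D k e = macaulay (dec_list lt (Mon n r e)) (m3h_rows n r lt f D k e)"

(* [H_1(K(f_1,...,f_s; K[x]))]_e = 0, written out: every degree-e syzygy of the
   Koszul differential d_1(e_l) = f_l lies in the image of d_2,
   d_2(e_i \<and> e_j) = f_i e_j - f_j e_i (i<j), where e_l has degree D l. *)
definition H1_vanishes :: "(nat \<Rightarrow> nat) \<Rightarrow> nat \<Rightarrow> (nat \<Rightarrow> 'a::field mpoly)
    \<Rightarrow> (nat \<Rightarrow> nat \<Rightarrow> int) \<Rightarrow> nat \<Rightarrow> (nat \<Rightarrow> int) \<Rightarrow> bool" where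
  "H1_vanishes n r f D s e \<longleftrightarrow>
     (\<forall>g :: nat \<Rightarrow> 'a mpoly.
        (\<forall>l\<in>{1..s}. homog n r (\<lambda>i. e i - D l i) (g l)) \<and> (\<Sum>l=1..s. g l * f l) = 0 \<longrightarrow>
        (\<exists>h :: nat \<Rightarrow> nat \<Rightarrow> 'a mpoly.
           (\<forall>i j. 1 \<le> i \<and> i < j \<and> j \<le> s \<longrightarrow> homog n r (\<lambda>t. e t - D i t - D j t) (h i j)) \<and>
           (\<forall>l\<in>{1..s}. g l = (\<Sum>i=1..<l. h i l * f i) - (\<Sum>j=Suc l..s. h l j * f j))))"

definition full_rank :: "'a::field mat \<Rightarrow> bool" where
  "full_rank A \<longleftrightarrow> vec_space.rank (dim_row A) A = min (dim_row A) (dim_col A)"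

end

theory Submission
  imports Defs
begin

(* If every f_s is multihomogeneous, the rows of M^k_e span the degree-e part I_k(e) of the
   ideal (f_1, ..., f_k). This goes by induction on k: a product x^beta f_k that the algorithm
   skips has beta in L, the set of leading monomials of the echelon form of
   M^(k-1)_(e - deg f_k), so beta is the leading monomial of some q in the row space of that
   matrix. Normalising q to leading coefficient 1, x^beta f_k = q f_k + (x^beta - q) f_k, where
   q f_k lies in I_(k-1)(e) and x^beta - q only involves monomials smaller than beta.

   The rows are linearly independent, again by induction on k. A vanishing combination of the
   rows of M^k_d reads p + g f_k = 0 with p in the row space of M^(k-1)_d and g supported on
   monomials outside L. As H_1 of f_1, ..., f_k vanishes in degree d, the cofactor g of this
   syzygy lies in I_(k-1)(d - deg f_k), the row space of M^(k-1)_(d - deg f_k). A nonzero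
   element of that space has its leading monomial in L, so g = 0, and the induction hypothesis
   disposes of the remaining coefficients. *)

section \<open>Monomials and monomial orders\<close>

lemma vars_eq_Sigma: "vars n r = Sigma {..<r} (\<lambda>i. {..n i})"
  unfolding vars_def by auto

lemma finite_Mon: "finite (Mon n r e)"
proof -
  define B where "B = Max ((\<lambda>i. nat (e i)) ` {..<r})"
  define F where "F = {g. \<forall>x. (x \<in> vars n r \<longrightarrow> g x \<in> {..B}) \<and> (x \<notin> vars n r \<longrightarrow> g x = 0)}"
  have "Poly_Mapping.lookup m \<in> F" if m: "m \<in> Mon n r e" for m
  proof -
    have "Poly_Mapping.lookup m (i, j) \<le> B" if ij: "i < r" "j \<le> n i" for i j
    proof -
      have "Poly_Mapping.lookup m (i, j) \<le> (\<Sum>j'\<le>n i. Poly_Mapping.lookup m (i, j'))"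
        using ij by (intro member_le_sum) auto
      also have "\<dots> = nat (e i)"
        using m ij unfolding Mon_def mdeg_def by (metis (mono_tags, lifting) mem_Collect_eq nat_int)
      also have "\<dots> \<le> B" unfolding B_def using ij by (intro Max_ge) auto
      finally show ?thesis .
    qed
    moreover have "Poly_Mapping.lookup m x = 0" if "x \<notin> vars n r" for x
      using m that unfolding Mon_def is_mono_def by (auto simp: in_keys_iff)
    ultimately show ?thesis unfolding F_def vars_def by auto
  qed
  then have "Poly_Mapping.lookup ` Mon n r e \<subseteq> F" by blast
  moreover have "finite F"
    unfolding F_def by (intro finite_set_of_finite_funs) (simp_all add: vars_eq_Sigma)
  ultimately have "finite (Poly_Mapping.lookup ` Mon n r e)" by (rule finite_subset)
  moreover have "inj_on Poly_Mapping.lookup (Mon n r e)" by (simp add: inj_on_def)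
  ultimately show ?thesis by (rule finite_imageD)
qed

locale monomial_ordering =
  fixes n :: "nat \<Rightarrow> nat" and r :: nat and lt :: "mono \<Rightarrow> mono \<Rightarrow> bool"
  assumes monomial_order: "monomial_order n r lt"
begin

lemma mono_lt_irrefl: "is_mono n r a \<Longrightarrow> \<not> lt a a"
  using monomial_order unfolding monomial_order_def by blast

lemma mono_lt_trans: "is_mono n r a \<Longrightarrow> is_mono n r b \<Longrightarrow> is_mono n r c \<Longrightarrow> lt a b \<Longrightarrow> lt b c \<Longrightarrow> lt a c"
  using monomial_order unfolding monomial_order_def by blast

lemma mono_lt_total: "is_mono n r a \<Longrightarrow> is_mono n r b \<Longrightarrow> a \<noteq> b \<Longrightarrow> lt a b \<or> lt b a"
  using monomial_order unfolding monomial_order_def by blast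

lemma mono_lt_asym: "is_mono n r a \<Longrightarrow> is_mono n r b \<Longrightarrow> lt a b \<Longrightarrow> \<not> lt b a"
  using mono_lt_irrefl mono_lt_trans by metis

lemma finite_mono_set_has_lt_max:
  assumes "finite A" "A \<noteq> {}" "\<forall>a\<in>A. is_mono n r a"
  obtains b where "b \<in> A" "\<And>a. a \<in> A \<Longrightarrow> a \<noteq> b \<Longrightarrow> lt a b"
proof -
  have "\<exists>b\<in>A. \<forall>a\<in>A. a \<noteq> b \<longrightarrow> lt a b"
    using assms
  proof (induction A rule: finite_ne_induct)
    case (insert x F)
    then obtain m where m: "m \<in> F" "\<forall>a\<in>F. a \<noteq> m \<longrightarrow> lt a m" by auto
    show ?case
    proof (cases "lt m x")
      case True
      then have "\<forall>a\<in>F. lt a x"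
        using m insert.prems mono_lt_trans[of _ m x] by (metis insert_iff)
      then show ?thesis by auto
    next
      case False
      then have "lt x m" using mono_lt_total[of m x] insert m by auto
      then show ?thesis using m by auto
    qed
  qed simp
  then show ?thesis using that by blast
qed

lemma sorted_desc_unique:
  "\<forall>a\<in>set xs. is_mono n r a \<Longrightarrow> set ys = set xs \<Longrightarrow> sorted_wrt (\<lambda>a b. lt b a) xs
    \<Longrightarrow> sorted_wrt (\<lambda>a b. lt b a) ys \<Longrightarrow> xs = ys"
proof (induction xs arbitrary: ys)
  case (Cons x xs)
  then obtain y ys' where ys: "ys = y # ys'" by (cases ys) auto
  have mono: "is_mono n r x" "is_mono n r y" using Cons.prems(1,2) ys by auto
  have "x = y"
  proof (rule ccontr)
    assume "x \<noteq> y"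
    then have "lt y x" "lt x y" using Cons.prems ys by auto
    then show False using mono_lt_asym mono by blast
  qed
  moreover have "x \<notin> set xs" "y \<notin> set ys'"
    using Cons.prems mono_lt_irrefl mono ys by auto
  ultimately have "set ys' = set xs" using Cons.prems(2) ys by auto
  then show ?case using Cons ys \<open>x = y\<close> by auto
qed simp

lemma sorted_desc_exists:
  assumes "finite S" "\<forall>a\<in>S. is_mono n r a"
  shows "\<exists>xs. set xs = S \<and> sorted_wrt (\<lambda>a b. lt b a) xs"
  using assms
proof (induction S rule: finite_remove_induct)
  case (remove A)
  obtain m where "m \<in> A" "\<And>a. a \<in> A \<Longrightarrow> a \<noteq> m \<Longrightarrow> lt a m"
    using finite_mono_set_has_lt_max remove by metis
  moreover obtain xs where "set xs = A - {m}" "sorted_wrt (\<lambda>a b. lt b a) xs"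
    using remove by (metis Diff_iff \<open>m \<in> A\<close>)
  ultimately show ?case by (intro exI[of _ "m # xs"]) auto
qed simp

lemma dec_list_Mon:
  shows "set (dec_list lt (Mon n r e)) = Mon n r e"
    and "sorted_wrt (\<lambda>a b. lt b a) (dec_list lt (Mon n r e))"
    and "distinct (dec_list lt (Mon n r e))"
proof -
  have mon: "\<forall>a\<in>Mon n r e. is_mono n r a" by (simp add: Mon_def)
  obtain xs where xs: "set xs = Mon n r e" "sorted_wrt (\<lambda>a b. lt b a) xs"
    using sorted_desc_exists[OF finite_Mon mon] by blast
  have "ys = xs" if "set ys = Mon n r e" "sorted_wrt (\<lambda>a b. lt b a) ys" for ys
    using sorted_desc_unique[of xs ys] xs mon that by simp
  with xs have "\<exists>!xs. set xs = Mon n r e \<and> sorted_wrt (\<lambda>a b. lt b a) xs"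
    by blast
  then have dec: "set (dec_list lt (Mon n r e)) = Mon n r e \<and>
      sorted_wrt (\<lambda>a b. lt b a) (dec_list lt (Mon n r e))"
    unfolding dec_list_def by (rule theI')
  then show "set (dec_list lt (Mon n r e)) = Mon n r e"
    and "sorted_wrt (\<lambda>a b. lt b a) (dec_list lt (Mon n r e))"
    by auto
  show "distinct (dec_list lt (Mon n r e))"
    using dec mon mono_lt_irrefl
    by (metis sorted_wrt_iff_nth_less distinct_conv_nth nat_neq_iff nth_mem)
qed

lemma Mon_lt_induct [consumes 1, case_names less]:
  assumes "\<beta> \<in> Mon n r e"
    and "\<And>\<beta>. \<beta> \<in> Mon n r e \<Longrightarrow> (\<And>\<gamma>. \<gamma> \<in> Mon n r e \<Longrightarrow> lt \<gamma> \<beta> \<Longrightarrow> P \<gamma>) \<Longrightarrow> P \<beta>"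
  shows "P \<beta>"
proof -
  define R where "R = {(\<gamma>, \<beta>). \<gamma> \<in> Mon n r e \<and> \<beta> \<in> Mon n r e \<and> lt \<gamma> \<beta>}"
  have "trans R"
    unfolding R_def trans_def using mono_lt_trans by (auto simp: Mon_def)
  moreover have "irrefl R"
    unfolding R_def irrefl_def using mono_lt_irrefl by (auto simp: Mon_def)
  ultimately have "acyclic R" by (simp add: acyclic_irrefl)
  moreover have "finite R"
    by (rule finite_subset[of _ "Mon n r e \<times> Mon n r e"]) (auto simp: R_def finite_Mon)
  ultimately have "wf R" by (intro finite_acyclic_wf)
  then have "\<beta> \<in> Mon n r e \<longrightarrow> P \<beta>"
  proof (induction \<beta> rule: wf_induct_rule)
    case (less \<beta>)
    then show ?case using assms(2)[of \<beta>] by (auto simp: R_def)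
  qed
  then show ?thesis using assms(1) by blast
qed

end

section \<open>Polynomials as vectors\<close>

definition smult :: "'a::comm_ring_1 \<Rightarrow> 'a mpoly \<Rightarrow> 'a mpoly" where
  "smult c p = Poly_Mapping.single 0 c * p"

lemma lookup_smult [simp]: "Poly_Mapping.lookup (smult c p) x = c * Poly_Mapping.lookup p x"
  unfolding smult_def mult_map_scale_conv_mult[symmetric] by transfer (auto simp: when_def)

interpretation mpoly: module "smult :: 'a::comm_ring_1 \<Rightarrow> 'a mpoly \<Rightarrow> 'a mpoly"
  by standard (auto intro!: poly_mapping_eqI simp: lookup_add algebra_simps)

lemma smult_mult: "smult c (p * q) = smult c p * q"
  unfolding smult_def by (simp add: mult.assoc)

lemma keys_smult: "Poly_Mapping.keys (smult c p) \<subseteq> Poly_Mapping.keys p"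
  by (auto simp: in_keys_iff)

lemma mult_eq_sum_monomial_mult:
  "p * h = (\<Sum>x\<in>Poly_Mapping.keys p. smult (Poly_Mapping.lookup p x) (Poly_Mapping.single x 1 * h))"
proof -
  have "p = (\<Sum>x\<in>Poly_Mapping.keys p. Poly_Mapping.single x (Poly_Mapping.lookup p x))"
    by (rule poly_mapping_eqI) (simp add: lookup_sum lookup_single when_def sum.delta' in_keys_iff)
  moreover have "Poly_Mapping.single x c * h = smult c (Poly_Mapping.single x 1 * h)" for x c
    unfolding smult_def by (simp add: mult.assoc[symmetric] mult_single)
  ultimately show ?thesis
    by (metis (no_types, lifting) sum.cong sum_distrib_right)
qed

definition list_comb :: "(nat \<Rightarrow> 'a::comm_ring_1) \<Rightarrow> 'a mpoly list \<Rightarrow> 'a mpoly" where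
  "list_comb c ps = (\<Sum>i<length ps. smult (c i) (ps ! i))"

lemma lookup_list_comb:
  "Poly_Mapping.lookup (list_comb c ps) x = (\<Sum>i<length ps. c i * Poly_Mapping.lookup (ps ! i) x)"
  unfolding list_comb_def by (simp add: lookup_sum)

lemma keys_list_comb: "Poly_Mapping.keys (list_comb c ps) \<subseteq> (\<Union>p\<in>set ps. Poly_Mapping.keys p)"
proof
  fix x assume "x \<in> Poly_Mapping.keys (list_comb c ps)"
  then obtain i where "i < length ps" "Poly_Mapping.lookup (ps ! i) x \<noteq> 0"
    unfolding in_keys_iff lookup_list_comb
    by (metis (no_types, lifting) lessThan_iff mult_zero_right sum.neutral)
  then show "x \<in> (\<Union>p\<in>set ps. Poly_Mapping.keys p)" by (auto simp: in_keys_iff)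
qed

lemma sum_lessThan_add_split:
  fixes g :: "nat \<Rightarrow> 'b::comm_monoid_add"
  shows "(\<Sum>i<a + b. g i) = (\<Sum>i<a. g i) + (\<Sum>i<b. g (a + i))"
  by (induction b) (simp_all add: add.assoc)

lemma list_comb_append:
  "list_comb c (xs @ ys) = list_comb c xs + list_comb (\<lambda>i. c (length xs + i)) ys"
  unfolding list_comb_def length_append sum_lessThan_add_split
  by (intro arg_cong2[where f="(+)"] sum.cong) (auto simp: nth_append)

lemma list_comb_map_mult: "list_comb c (map (\<lambda>x. g x * h) xs) = list_comb c (map g xs) * h"
  unfolding list_comb_def by (simp add: sum_distrib_right smult_mult)

lemma lookup_list_comb_monomials:
  assumes "distinct bs" "j < length bs"
  shows "Poly_Mapping.lookup (list_comb c (map (\<lambda>\<beta>. Poly_Mapping.single \<beta> 1) bs)) (bs ! j) = c j"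
proof -
  have "Poly_Mapping.lookup (list_comb c (map (\<lambda>\<beta>. Poly_Mapping.single \<beta> 1) bs)) (bs ! j) =
      (\<Sum>i<length bs. if i = j then c j else 0)"
    unfolding lookup_list_comb
    by (intro sum.cong) (use assms in \<open>auto simp: lookup_single when_def nth_eq_iff_index_eq\<close>)
  then show ?thesis using assms(2) by simp
qed

lemma span_set_eq_range_list_comb: "mpoly.span (set ps) = range (\<lambda>c. list_comb c ps)"
proof
  show "range (\<lambda>c. list_comb c ps) \<subseteq> mpoly.span (set ps)"
  proof clarify
    show "list_comb c ps \<in> mpoly.span (set ps)" for c
      unfolding list_comb_def by (intro mpoly.span_sum mpoly.span_scale mpoly.span_base) auto
  qed
  have "p \<in> range (\<lambda>c. list_comb c ps)" if "p \<in> set ps" for p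
  proof -
    obtain i where i: "i < length ps" "p = ps ! i"
      using \<open>p \<in> set ps\<close> by (auto simp: in_set_conv_nth)
    have "list_comb (\<lambda>j. if j = i then 1 else 0) ps = p"
    proof (rule poly_mapping_eqI)
      fix x
      have "(\<Sum>j<length ps. (if j = i then 1 else 0) * Poly_Mapping.lookup (ps ! j) x) =
          (\<Sum>j<length ps. if j = i then Poly_Mapping.lookup (ps ! j) x else 0)"
        by (rule sum.cong) auto
      then show "Poly_Mapping.lookup (list_comb (\<lambda>j. if j = i then 1 else 0) ps) x =
          Poly_Mapping.lookup p x"
        using i by (simp add: lookup_list_comb)
    qed
    then show ?thesis by (metis rangeI)
  qed
  moreover have "mpoly.subspace (range (\<lambda>c. list_comb c ps))"
  proof (rule mpoly.subspaceI)
    show "0 \<in> range (\<lambda>c. list_comb c ps)"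
      by (rule range_eqI[of _ _ "\<lambda>_. 0"]) (simp add: list_comb_def)
    show "p + q \<in> range (\<lambda>c. list_comb c ps)"
      if pq: "p \<in> range (\<lambda>c. list_comb c ps)" "q \<in> range (\<lambda>c. list_comb c ps)" for p q
    proof -
      obtain c1 c2 where "p = list_comb c1 ps" "q = list_comb c2 ps" using pq by blast
      then have "p + q = list_comb (\<lambda>i. c1 i + c2 i) ps"
        by (intro poly_mapping_eqI)
          (simp add: lookup_add lookup_list_comb sum.distrib algebra_simps)
      then show ?thesis by blast
    qed
    show "smult a p \<in> range (\<lambda>c. list_comb c ps)" if p: "p \<in> range (\<lambda>c. list_comb c ps)" for a p
    proof -
      obtain c where "p = list_comb c ps" using p by blast
      then have "smult a p = list_comb (\<lambda>i. a * c i) ps"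
        by (intro poly_mapping_eqI) (simp add: lookup_list_comb sum_distrib_left algebra_simps)
      then show ?thesis by blast
    qed
  qed
  ultimately show "mpoly.span (set ps) \<subseteq> range (\<lambda>c. list_comb c ps)"
    by (intro mpoly.span_minimal) auto
qed

lemma list_comb_in_span: "list_comb c ps \<in> mpoly.span (set ps)"
  unfolding span_set_eq_range_list_comb by blast

section \<open>Homogeneous parts of ideals\<close>

lemma homog_cong: "(\<And>i. i < r \<Longrightarrow> a i = b i) \<Longrightarrow> homog n r a p \<Longrightarrow> homog n r b p"
  unfolding homog_def Mon_def by auto

lemma homog_zero [simp]: "homog n r e 0"
  unfolding homog_def by simp

lemma homog_add: "homog n r e p \<Longrightarrow> homog n r e q \<Longrightarrow> homog n r e (p + q)"
  using keys_add[of p q] unfolding homog_def by blast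

lemma homog_smult: "homog n r e p \<Longrightarrow> homog n r e (smult c p)"
  using keys_smult[of c p] unfolding homog_def by blast

lemma homog_single: "\<beta> \<in> Mon n r e \<Longrightarrow> homog n r e (Poly_Mapping.single \<beta> c)"
  unfolding homog_def by auto

lemma Mon_add: "x \<in> Mon n r a \<Longrightarrow> y \<in> Mon n r b \<Longrightarrow> x + y \<in> Mon n r (\<lambda>i. a i + b i)"
  using keys_add[of x y] unfolding Mon_def is_mono_def mdeg_def
  by (auto simp: lookup_add sum.distrib)

lemma homog_mult: "homog n r a p \<Longrightarrow> homog n r b q \<Longrightarrow> homog n r (\<lambda>i. a i + b i) (p * q)"
  unfolding homog_def using keys_mult[of p q] Mon_add by blast

lemma subspace_homog: "mpoly.subspace {p. homog n r e p}"
  by (intro mpoly.subspaceI) (auto intro: homog_add homog_smult)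

lemma homog_span: "\<forall>q\<in>S. homog n r e q \<Longrightarrow> p \<in> mpoly.span S \<Longrightarrow> homog n r e p"
  using mpoly.span_minimal[OF _ subspace_homog] by blast

definition ideal_deg :: "(nat \<Rightarrow> nat) \<Rightarrow> nat \<Rightarrow> (nat \<Rightarrow> 'a::comm_ring_1 mpoly) \<Rightarrow> (nat \<Rightarrow> nat \<Rightarrow> int)
    \<Rightarrow> nat \<Rightarrow> (nat \<Rightarrow> int) \<Rightarrow> 'a mpoly set" where
  "ideal_deg n r f D k e =
     {\<Sum>s=1..k. g s * f s | g. \<forall>s\<in>{1..k}. homog n r (\<lambda>i. e i - D s i) (g s)}"

lemma ideal_degI:
  "(\<And>s. s \<in> {1..k} \<Longrightarrow> homog n r (\<lambda>i. e i - D s i) (g s)) \<Longrightarrow> p = (\<Sum>s=1..k. g s * f s)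
    \<Longrightarrow> p \<in> ideal_deg n r f D k e"
  unfolding ideal_deg_def by blast

lemma subspace_ideal_deg: "mpoly.subspace (ideal_deg n r f D k e)"
proof (rule mpoly.subspaceI)
  show "0 \<in> ideal_deg n r f D k e"
    by (rule ideal_degI[where g = "\<lambda>_. 0"]) auto
  show "p + q \<in> ideal_deg n r f D k e"
    if pq: "p \<in> ideal_deg n r f D k e" "q \<in> ideal_deg n r f D k e" for p q
  proof -
    obtain g1 g2 where
      g1: "\<forall>s\<in>{1..k}. homog n r (\<lambda>i. e i - D s i) (g1 s)" "p = (\<Sum>s=1..k. g1 s * f s)" and
      g2: "\<forall>s\<in>{1..k}. homog n r (\<lambda>i. e i - D s i) (g2 s)" "q = (\<Sum>s=1..k. g2 s * f s)"
      using pq unfolding ideal_deg_def by blast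
    show ?thesis
      by (rule ideal_degI[where g = "\<lambda>s. g1 s + g2 s"])
        (use g1 g2 in \<open>auto intro: homog_add simp: sum.distrib distrib_right\<close>)
  qed
  show "smult c p \<in> ideal_deg n r f D k e" if p: "p \<in> ideal_deg n r f D k e" for c p
  proof -
    obtain g where g: "\<forall>s\<in>{1..k}. homog n r (\<lambda>i. e i - D s i) (g s)" "p = (\<Sum>s=1..k. g s * f s)"
      using p unfolding ideal_deg_def by blast
    show ?thesis
      by (rule ideal_degI[where g = "\<lambda>s. smult c (g s)"])
        (use g in \<open>auto intro: homog_smult simp: mpoly.scale_sum_right smult_mult\<close>)
  qed
qed

lemma mult_in_ideal_deg:
  assumes "s \<in> {1..k}" "homog n r (\<lambda>i. e i - D s i) g"
  shows "g * f s \<in> ideal_deg n r f D k e"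
proof (rule ideal_degI[where g = "\<lambda>l. if l = s then g else 0"])
  have "(\<Sum>l=1..k. (if l = s then g else 0) * f l) = (\<Sum>l=1..k. if l = s then g * f l else 0)"
    by (rule sum.cong) auto
  then show "g * f s = (\<Sum>l=1..k. (if l = s then g else 0) * f l)"
    using assms(1) by simp
qed (use assms in auto)

lemma ideal_deg_mult:
  assumes p: "p \<in> ideal_deg n r f D k a" and q: "homog n r b q"
    and e: "\<And>i. i < r \<Longrightarrow> e i = a i + b i"
  shows "p * q \<in> ideal_deg n r f D k e"
proof -
  obtain g where g: "\<forall>s\<in>{1..k}. homog n r (\<lambda>i. a i - D s i) (g s)" "p = (\<Sum>s=1..k. g s * f s)"
    using p unfolding ideal_deg_def by blast
  show ?thesis
  proof (rule ideal_degI[where g = "\<lambda>s. g s * q"])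
    show "homog n r (\<lambda>i. e i - D s i) (g s * q)" if "s \<in> {1..k}" for s
      using homog_mult[OF g(1)[rule_format, OF that] q] by (rule homog_cong[rotated]) (simp add: e)
    show "p * q = (\<Sum>s=1..k. g s * q * f s)"
      unfolding g(2) sum_distrib_right by (simp add: ac_simps)
  qed
qed

lemma ideal_deg_mono_Suc: "ideal_deg n r f D k e \<subseteq> ideal_deg n r f D (Suc k) e"
proof
  fix p assume "p \<in> ideal_deg n r f D k e"
  then obtain g where g: "\<forall>s\<in>{1..k}. homog n r (\<lambda>i. e i - D s i) (g s)" "p = (\<Sum>s=1..k. g s * f s)"
    unfolding ideal_deg_def by blast
  show "p \<in> ideal_deg n r f D (Suc k) e"
    by (rule ideal_degI[where g = "\<lambda>s. if s = Suc k then 0 else g s"]) (use g in auto)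
qed

lemma ideal_deg_SucE:
  assumes "p \<in> ideal_deg n r f D (Suc k) e"
  obtains q g where "q \<in> ideal_deg n r f D k e" "homog n r (\<lambda>i. e i - D (Suc k) i) g"
    "p = q + g * f (Suc k)"
proof -
  obtain g where g: "\<forall>s\<in>{1..Suc k}. homog n r (\<lambda>i. e i - D s i) (g s)"
    "p = (\<Sum>s=1..Suc k. g s * f s)"
    using assms unfolding ideal_deg_def by blast
  have "(\<Sum>s=1..k. g s * f s) \<in> ideal_deg n r f D k e"
    by (rule ideal_degI) (use g(1) in auto)
  moreover have "homog n r (\<lambda>i. e i - D (Suc k) i) (g (Suc k))"
    using g(1) by simp
  moreover have "p = (\<Sum>s=1..k. g s * f s) + g (Suc k) * f (Suc k)"
    using g(2) by simp
  ultimately show ?thesis by (rule that)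
qed

lemma H1_vanishes_last_cofactor_in_ideal_deg:
  assumes H: "H1_vanishes n r f D (Suc k) e"
    and g: "\<forall>l\<in>{1..Suc k}. homog n r (\<lambda>i. e i - D l i) (g l)"
    and syzygy: "(\<Sum>l=1..Suc k. g l * f l) = 0"
  shows "g (Suc k) \<in> ideal_deg n r f D k (\<lambda>i. e i - D (Suc k) i)"
proof -
  obtain h where h: "\<forall>i j. 1 \<le> i \<and> i < j \<and> j \<le> Suc k \<longrightarrow> homog n r (\<lambda>t. e t - D i t - D j t) (h i j)"
    and g_eq: "\<forall>l\<in>{1..Suc k}. g l = (\<Sum>i=1..<l. h i l * f i) - (\<Sum>j=Suc l..Suc k. h l j * f j)"
    using H g syzygy unfolding H1_vanishes_def by blast
  have "g (Suc k) = (\<Sum>s=1..k. h s (Suc k) * f s)"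
    using g_eq by (simp add: atLeastLessThanSuc_atLeastAtMost)
  then show ?thesis
    by (intro ideal_degI[where g = "\<lambda>s. h s (Suc k)"] homog_cong[OF _ h[rule_format]]) auto
qed

section \<open>Gauss-Jordan elimination\<close>

lemma index_mult_mat_sum:
  assumes "A \<in> carrier_mat nr n" "B \<in> carrier_mat n nc" "i < nr" "j < nc"
  shows "(A * B) $$ (i, j) = (\<Sum>l<n. A $$ (i, l) * B $$ (l, j))"
  using assms by (simp add: scalar_prod_def atLeast0LessThan)

lemma gauss_jordan_single_decomp:
  assumes A: "A \<in> carrier_mat nr nc"
  obtains P Q f where "gauss_jordan_single A \<in> carrier_mat nr nc"
    "P \<in> carrier_mat nr nr" "Q \<in> carrier_mat nr nr" "P * Q = 1\<^sub>m nr"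
    "gauss_jordan_single A = P * A" "A = Q * gauss_jordan_single A"
    "pivot_fun (gauss_jordan_single A) f nc"
proof -
  define G where "G = gauss_jordan_single A"
  note gj = gauss_jordan_single[OF A G_def[symmetric]]
  obtain P Q where PQ: "G = P * A" "P \<in> carrier_mat nr nr" "Q \<in> carrier_mat nr nr"
    "P * Q = 1\<^sub>m nr" "Q * P = 1\<^sub>m nr" using gj(4) by blast
  have "Q * G = (Q * P) * A" using PQ(1) assoc_mult_mat[OF PQ(3) PQ(2) A] by simp
  then have "A = Q * G" using PQ(5) A by simp
  moreover obtain f where "pivot_fun G f nc"
    using gj(2,3) unfolding row_echelon_form_def by auto
  ultimately show ?thesis using that PQ gj(2) unfolding G_def by blast
qed

lemma pivot_fun_strict_mono:
  assumes pf: "pivot_fun G f nc" and nr: "dim_row G = nr"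
  shows "l1 < l2 \<Longrightarrow> l2 < nr \<Longrightarrow> f l2 < nc \<Longrightarrow> f l1 < f l2"
proof (induction l2)
  case (Suc m)
  then have "f m < f (Suc m)"
    using pivot_funD(3)[OF nr pf Suc_lessD[OF Suc.prems(2)] Suc.prems(2)] by auto
  then show ?case using Suc by (cases "l1 = m") auto
qed simp

text \<open>In reduced row echelon form, the first nonzero entry of a combination of rows sits in the
  pivot column of the first row that occurs with a nonzero coefficient.\<close>

lemma pivot_fun_row_comb_leading_column:
  fixes G :: "'a::field mat"
  assumes pf: "pivot_fun G f nc" and nr: "dim_row G = nr" and j0: "j0 < nc"
    and nz: "(\<Sum>l<nr. c l * G $$ (l, j0)) \<noteq> 0"
    and z: "\<forall>j<j0. (\<Sum>l<nr. c l * G $$ (l, j)) = 0"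
  shows "\<exists>m<nr. f m = j0"
proof -
  note pivot = pivot_funD[OF nr pf]
  define S where "S = {l. l < nr \<and> c l \<noteq> 0 \<and> f l < nc}"
  have "S \<noteq> {}"
  proof
    assume "S = {}"
    have "c l * G $$ (l, j0) = 0" if l: "l < nr" for l
    proof (cases "c l = 0")
      case False
      then have "j0 < f l" using \<open>S = {}\<close> pivot(1)[OF l] j0 l unfolding S_def by fastforce
      then show ?thesis using pivot(2)[OF l] by simp
    qed simp
    then have "(\<Sum>l<nr. c l * G $$ (l, j0)) = 0" by (intro sum.neutral) simp
    with nz show False by contradiction
  qed
  define m where "m = Min S"
  have "m \<in> S" unfolding m_def using \<open>S \<noteq> {}\<close> by (intro Min_in) (auto simp: S_def)
  then have m: "m < nr" "c m \<noteq> 0" "f m < nc" unfolding S_def by auto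
  have before: "(\<Sum>l<nr. c l * G $$ (l, j)) = 0" if j: "j < f m" for j
  proof (intro sum.neutral ballI)
    fix l assume "l \<in> {..<nr}"
    then have l: "l < nr" by simp
    have "j < f l" if "c l \<noteq> 0"
    proof (cases "f l < nc")
      case True
      then have "m \<le> l" using l that unfolding m_def S_def by (intro Min_le) auto
      then have "f m \<le> f l"
        using pivot_fun_strict_mono[OF pf nr, of m l] l True by (cases "m = l") auto
      then show ?thesis using j by simp
    next
      case False
      then show ?thesis using pivot(1)[OF l] j m(3) by simp
    qed
    then show "c l * G $$ (l, j) = 0" using pivot(2)[OF l] by (cases "c l = 0") auto
  qed
  have "(\<Sum>l<nr. c l * G $$ (l, f m)) = (\<Sum>l<nr. if l = m then c m else 0)"
    by (rule sum.cong) (use pivot(4,5) m in auto)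
  then have at_pivot: "(\<Sum>l<nr. c l * G $$ (l, f m)) \<noteq> 0" using m by simp
  have "f m = j0"
  proof (rule linorder_cases[of j0 "f m"])
    assume "j0 < f m"
    then show ?thesis using before nz by blast
  next
    assume "f m < j0"
    then show ?thesis using z at_pivot by blast
  qed simp
  then show ?thesis using m by blast
qed

lemma gauss_jordan_single_leading_entry_iff:
  assumes A: "A \<in> carrier_mat nr nc" and j: "j < nc"
  shows "(\<exists>i<nr. gauss_jordan_single A $$ (i, j) \<noteq> 0 \<and>
             (\<forall>j'<j. gauss_jordan_single A $$ (i, j') = 0)) \<longleftrightarrow>
         (\<exists>c. (\<Sum>i<nr. c i * A $$ (i, j)) \<noteq> 0 \<and> (\<forall>j'<j. (\<Sum>i<nr. c i * A $$ (i, j')) = 0))"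
proof -
  define G where "G = gauss_jordan_single A"
  obtain P Q f where G: "G \<in> carrier_mat nr nc"
    and P: "P \<in> carrier_mat nr nr" and Q: "Q \<in> carrier_mat nr nr"
    and GPA: "G = P * A" and AQG: "A = Q * G" and pf: "pivot_fun G f nc"
    using gauss_jordan_single_decomp[OF A] unfolding G_def by metis
  have nr: "dim_row G = nr" using G by simp
  show ?thesis unfolding G_def[symmetric]
  proof
    assume "\<exists>i<nr. G $$ (i, j) \<noteq> 0 \<and> (\<forall>j'<j. G $$ (i, j') = 0)"
    then obtain i where i: "i < nr" "G $$ (i, j) \<noteq> 0" "\<forall>j'<j. G $$ (i, j') = 0" by blast
    have "(\<Sum>l<nr. P $$ (i, l) * A $$ (l, j')) = G $$ (i, j')" if "j' < nc" for j'
      using index_mult_mat_sum[OF P A i(1) that] GPA by simp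
    then show "\<exists>c. (\<Sum>i<nr. c i * A $$ (i, j)) \<noteq> 0 \<and> (\<forall>j'<j. (\<Sum>i<nr. c i * A $$ (i, j')) = 0)"
      using i j by (intro exI[of _ "\<lambda>l. P $$ (i, l)"]) auto
  next
    assume "\<exists>c. (\<Sum>i<nr. c i * A $$ (i, j)) \<noteq> 0 \<and> (\<forall>j'<j. (\<Sum>i<nr. c i * A $$ (i, j')) = 0)"
    then obtain c where c: "(\<Sum>i<nr. c i * A $$ (i, j)) \<noteq> 0"
      "\<forall>j'<j. (\<Sum>i<nr. c i * A $$ (i, j')) = 0"
      by blast
    define c' where "c' l = (\<Sum>i<nr. c i * Q $$ (i, l))" for l
    have comb: "(\<Sum>i<nr. c i * A $$ (i, j')) = (\<Sum>l<nr. c' l * G $$ (l, j'))" if "j' < nc" for j'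
    proof -
      have "(\<Sum>i<nr. c i * A $$ (i, j')) = (\<Sum>i<nr. \<Sum>l<nr. c i * Q $$ (i, l) * G $$ (l, j'))"
        using AQG index_mult_mat_sum[OF Q G _ that] by (simp add: sum_distrib_left mult.assoc)
      also have "\<dots> = (\<Sum>l<nr. c' l * G $$ (l, j'))"
        unfolding c'_def by (subst sum.swap) (simp add: sum_distrib_right)
      finally show ?thesis .
    qed
    obtain m where m: "m < nr" "f m = j"
      using pivot_fun_row_comb_leading_column[OF pf nr j, where c = c'] c comb j by auto
    then show "\<exists>i<nr. G $$ (i, j) \<noteq> 0 \<and> (\<forall>j'<j. G $$ (i, j') = 0)"
      using pivot_funD(2,4)[OF nr pf m(1)] j by auto
  qed
qed

lemma (in vec_space) rank_le_nr:
  assumes "A \<in> carrier_mat n nc"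
  shows "rank A \<le> n"
proof -
  have "set (cols A) \<subseteq> carrier_vec n" using assms cols_dim by blast
  then show ?thesis
    unfolding rank_def
    using subspace_dim[OF span_is_subspace fin_dim fin_dim_span_cols[OF assms]] dim_is_n by auto
qed

lemma rank_eq_dim_row_if_rows_lin_indep:
  fixes A :: "'a::field mat"
  assumes A: "A \<in> carrier_mat nr nc"
    and indep: "\<And>c. \<forall>j<nc. (\<Sum>i<nr. c i * A $$ (i, j)) = 0 \<Longrightarrow> \<forall>i<nr. c i = 0"
  shows "vec_space.rank nr A = nr"
proof -
  define G where "G = gauss_jordan_single A"
  obtain P Q f where G: "G \<in> carrier_mat nr nc"
    and P: "P \<in> carrier_mat nr nr" and Q: "Q \<in> carrier_mat nr nr" and PQ: "P * Q = 1\<^sub>m nr"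
    and GPA: "G = P * A" and AQG: "A = Q * G" and pf: "pivot_fun G f nc"
    using gauss_jordan_single_decomp[OF A] unfolding G_def by metis
  have nr: "dim_row G = nr" using G by simp
  note pivot = pivot_funD[OF nr pf]
  have full_pivots: "f i < nc" if i: "i < nr" for i
  proof (rule ccontr)
    assume "\<not> f i < nc"
    then have "G $$ (i, j) = 0" if "j < nc" for j using pivot(1,2) i that by fastforce
    then have "\<forall>j<nc. (\<Sum>l<nr. P $$ (i, l) * A $$ (l, j)) = 0"
      using index_mult_mat_sum[OF P A i] GPA by auto
    then have "\<forall>l<nr. P $$ (i, l) = 0" by (rule indep)
    then have "(P * Q) $$ (i, i) = 0" using index_mult_mat_sum[OF P Q i i] by simp
    then show False using PQ i by simp
  qed
  have col_pivot: "col A (f i) = col Q i" if i: "i < nr" for i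
  proof (rule eq_vecI)
    fix k assume "k < dim_vec (col Q i)"
    then have k: "k < nr" using Q by simp
    have "A $$ (k, f i) = (\<Sum>l<nr. Q $$ (k, l) * G $$ (l, f i))"
      using index_mult_mat_sum[OF Q G k full_pivots[OF i]] AQG by simp
    also have "\<dots> = (\<Sum>l<nr. if l = i then Q $$ (k, i) else 0)"
      by (rule sum.cong) (use pivot(4,5)[OF i full_pivots[OF i]] in auto)
    finally show "col A (f i) $ k = col Q i $ k" using k A Q full_pivots[OF i] i by simp
  qed (use A Q in simp)
  have cols: "set (cols Q) \<subseteq> set (cols A)"
  proof
    fix v assume "v \<in> set (cols Q)"
    then obtain i where i: "i < nr" "v = col Q i" using Q by (auto simp: in_set_conv_nth)
    have "f i < length (cols A)" using full_pivots[OF i(1)] A by simp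
    then have "cols A ! f i \<in> set (cols A)" by (rule nth_mem)
    moreover have "cols A ! f i = v" using col_pivot i full_pivots[OF i(1)] A by simp
    ultimately show "v \<in> set (cols A)" by simp
  qed
  interpret vec_space "TYPE('a)" nr .
  have "det P * det Q = 1" using det_mult[OF P Q] PQ by simp
  then have "rank Q = nr" using det_rank_iff[OF Q] by auto
  then have "distinct (cols Q)" using non_distinct_low_rank[OF Q] by auto
  then have "lin_indpt (set (cols Q))" "card (set (cols Q)) = nr"
    using full_rank_lin_indpt[OF Q \<open>rank Q = nr\<close>] Q by (auto simp: distinct_card)
  then have "rank A \<ge> nr" using rank_ge_card_indpt[OF A cols] by simp
  then show ?thesis using rank_le_nr[OF A] by simp
qed

section \<open>Macaulay matrices and leading monomials\<close>

lemma lookup_list_comb_macaulay: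
  "j < length ms \<Longrightarrow>
    Poly_Mapping.lookup (list_comb c ps) (ms ! j) = (\<Sum>i<length ps. c i * macaulay ms ps $$ (i, j))"
  unfolding lookup_list_comb macaulay_def by (intro sum.cong) auto

lemma full_rank_macaulay:
  fixes ps :: "'a::field mpoly list"
  assumes keys: "\<And>p. p \<in> set ps \<Longrightarrow> Poly_Mapping.keys p \<subseteq> set ms"
    and indep: "\<And>c. list_comb c ps = 0 \<Longrightarrow> \<forall>i<length ps. c i = 0"
  shows "full_rank (macaulay ms ps)"
proof -
  define A where "A = macaulay ms ps"
  have A: "A \<in> carrier_mat (length ps) (length ms)" unfolding A_def macaulay_def by simp
  have "\<forall>i<length ps. c i = 0" if zero: "\<forall>j<length ms. (\<Sum>i<length ps. c i * A $$ (i, j)) = 0" for c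
  proof -
    have "Poly_Mapping.lookup (list_comb c ps) x = 0" for x
    proof (cases "x \<in> set ms")
      case True
      then obtain j where "j < length ms" "x = ms ! j" by (metis in_set_conv_nth)
      then show ?thesis using zero lookup_list_comb_macaulay[of j ms c ps] by (simp add: A_def)
    next
      case False
      then have "x \<notin> Poly_Mapping.keys (list_comb c ps)" using keys_list_comb[of c ps] keys by blast
      then show ?thesis by (simp add: in_keys_iff)
    qed
    then have "list_comb c ps = 0" by (intro poly_mapping_eqI) simp
    then show ?thesis by (rule indep)
  qed
  then have "vec_space.rank (length ps) A = length ps"
    by (rule rank_eq_dim_row_if_rows_lin_indep[OF A])
  moreover have "vec_space.rank (length ps) A \<le> length ms"
    by (rule vec_space.rank_le_nc[OF A])
  ultimately show ?thesis unfolding full_rank_def A_def[symmetric] using A by simp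
qed

definition is_lead_mono :: "(mono \<Rightarrow> mono \<Rightarrow> bool) \<Rightarrow> 'a::zero mpoly \<Rightarrow> mono \<Rightarrow> bool" where
  "is_lead_mono lt p \<beta> \<longleftrightarrow>
     \<beta> \<in> Poly_Mapping.keys p \<and> (\<forall>\<gamma>\<in>Poly_Mapping.keys p. \<gamma> \<noteq> \<beta> \<longrightarrow> lt \<gamma> \<beta>)"

lemma keys_lead_term_diff:
  assumes "is_lead_mono lt q \<beta>"
  shows "Poly_Mapping.keys (Poly_Mapping.single \<beta> (Poly_Mapping.lookup q \<beta>) - q)
    \<subseteq> {\<gamma> \<in> Poly_Mapping.keys q. lt \<gamma> \<beta>}"
proof
  fix \<gamma> assume \<gamma>: "\<gamma> \<in> Poly_Mapping.keys (Poly_Mapping.single \<beta> (Poly_Mapping.lookup q \<beta>) - q)"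
  then have "\<gamma> \<noteq> \<beta>" by (auto simp: in_keys_iff lookup_minus)
  then have "\<gamma> \<in> Poly_Mapping.keys q" using \<gamma> by (auto simp: in_keys_iff lookup_minus lookup_single)
  then show "\<gamma> \<in> {\<gamma> \<in> Poly_Mapping.keys q. lt \<gamma> \<beta>}"
    using assms \<open>\<gamma> \<noteq> \<beta>\<close> unfolding is_lead_mono_def by blast
qed

context monomial_ordering
begin

lemma is_lead_mono_nth_iff:
  assumes sorted: "sorted_wrt (\<lambda>a b. lt b a) ms" and mono: "\<forall>a\<in>set ms. is_mono n r a"
    and keys: "Poly_Mapping.keys p \<subseteq> set ms" and j: "j < length ms"
  shows "is_lead_mono lt p (ms ! j) \<longleftrightarrow>
    Poly_Mapping.lookup p (ms ! j) \<noteq> 0 \<and> (\<forall>j'<j. Poly_Mapping.lookup p (ms ! j') = 0)"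
proof
  assume lead: "is_lead_mono lt p (ms ! j)"
  have "Poly_Mapping.lookup p (ms ! j') = 0" if j': "j' < j" for j'
  proof -
    have "lt (ms ! j) (ms ! j')" using sorted_wrt_nth_less[OF sorted j' j] .
    moreover have "is_mono n r (ms ! j)" "is_mono n r (ms ! j')" using mono j j' by auto
    ultimately have "ms ! j' \<noteq> ms ! j" "\<not> lt (ms ! j') (ms ! j)"
      using mono_lt_irrefl[of "ms ! j"] mono_lt_asym[of "ms ! j" "ms ! j'"] by auto
    then show ?thesis using lead unfolding is_lead_mono_def by (auto simp: in_keys_iff)
  qed
  then show "Poly_Mapping.lookup p (ms ! j) \<noteq> 0 \<and> (\<forall>j'<j. Poly_Mapping.lookup p (ms ! j') = 0)"
    using lead unfolding is_lead_mono_def by (simp add: in_keys_iff)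
next
  assume nz: "Poly_Mapping.lookup p (ms ! j) \<noteq> 0 \<and> (\<forall>j'<j. Poly_Mapping.lookup p (ms ! j') = 0)"
  have "lt \<gamma> (ms ! j)" if \<gamma>: "\<gamma> \<in> Poly_Mapping.keys p" "\<gamma> \<noteq> ms ! j" for \<gamma>
  proof -
    have "\<gamma> \<in> set ms" using \<gamma>(1) keys by blast
    then obtain j' where j': "j' < length ms" "\<gamma> = ms ! j'" by (metis in_set_conv_nth)
    have "\<not> j' < j" using nz \<gamma>(1) j' by (auto simp: in_keys_iff)
    moreover have "j' \<noteq> j" using \<gamma>(2) j' by auto
    ultimately have "j < j'" by simp
    then show ?thesis using sorted_wrt_nth_less[OF sorted _ j'(1)] j' by simp
  qed
  then show "is_lead_mono lt p (ms ! j)"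
    using nz unfolding is_lead_mono_def by (simp add: in_keys_iff)
qed

lemma lead_monos_ge_macaulay_iff:
  assumes ps: "\<forall>q\<in>set ps. homog n r e q"
  shows "\<beta> \<in> lead_monos_ge (dec_list lt (Mon n r e)) (macaulay (dec_list lt (Mon n r e)) ps) \<longleftrightarrow>
    (\<exists>p\<in>mpoly.span (set ps). is_lead_mono lt p \<beta>)"
proof -
  define ms where "ms = dec_list lt (Mon n r e)"
  define A where "A = macaulay ms ps"
  note ms = dec_list_Mon[of e, folded ms_def]
  have A: "A \<in> carrier_mat (length ps) (length ms)" unfolding A_def macaulay_def by simp
  have keys: "Poly_Mapping.keys (list_comb c ps) \<subseteq> set ms" for c
    using homog_span[OF ps list_comb_in_span] ms(1) unfolding homog_def by blast
  have lead: "is_lead_mono lt (list_comb c ps) (ms ! j) \<longleftrightarrow>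
      (\<Sum>i<length ps. c i * A $$ (i, j)) \<noteq> 0 \<and> (\<forall>j'<j. (\<Sum>i<length ps. c i * A $$ (i, j')) = 0)"
    if "j < length ms" for c j
    using is_lead_mono_nth_iff[OF ms(2) _ keys that] ms(1) that
    by (simp add: lookup_list_comb_macaulay A_def Mon_def)
  have "\<beta> \<in> lead_monos_ge ms A \<longleftrightarrow> (\<exists>j<length ms. \<beta> = ms ! j \<and>
      (\<exists>i<length ps. gauss_jordan_single A $$ (i, j) \<noteq> 0 \<and>
        (\<forall>j'<j. gauss_jordan_single A $$ (i, j') = 0)))"
    using gauss_jordan_single(2)[OF A refl] unfolding lead_monos_ge_def Let_def by auto
  also have "\<dots> \<longleftrightarrow> (\<exists>j<length ms. \<beta> = ms ! j \<and> (\<exists>c. is_lead_mono lt (list_comb c ps) (ms ! j)))"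
    using gauss_jordan_single_leading_entry_iff[OF A] lead by (intro ex_cong1 conj_cong) simp_all
  also have "\<dots> \<longleftrightarrow> (\<exists>c. is_lead_mono lt (list_comb c ps) \<beta>)"
  proof
    assume "\<exists>c. is_lead_mono lt (list_comb c ps) \<beta>"
    then obtain c where c: "is_lead_mono lt (list_comb c ps) \<beta>" by blast
    then have "\<beta> \<in> set ms" using keys unfolding is_lead_mono_def by blast
    then show "\<exists>j<length ms. \<beta> = ms ! j \<and> (\<exists>c. is_lead_mono lt (list_comb c ps) (ms ! j))"
      using c by (auto simp: in_set_conv_nth)
  qed blast
  also have "\<dots> \<longleftrightarrow> (\<exists>p\<in>mpoly.span (set ps). is_lead_mono lt p \<beta>)"
    unfolding span_set_eq_range_list_comb by blast
  finally show ?thesis unfolding ms_def A_def .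
qed

lemma span_eq_0_if_keys_disjoint_lead_monos:
  assumes ps: "\<forall>q\<in>set ps. homog n r e q" and p: "p \<in> mpoly.span (set ps)"
    and disjoint: "Poly_Mapping.keys p \<inter>
      lead_monos_ge (dec_list lt (Mon n r e)) (macaulay (dec_list lt (Mon n r e)) ps) = {}"
  shows "p = 0"
proof (rule ccontr)
  assume "p \<noteq> 0"
  have "\<forall>a\<in>Poly_Mapping.keys p. is_mono n r a"
    using homog_span[OF ps p] unfolding homog_def Mon_def by blast
  then obtain \<beta> where "\<beta> \<in> Poly_Mapping.keys p" "\<And>\<gamma>. \<gamma> \<in> Poly_Mapping.keys p \<Longrightarrow> \<gamma> \<noteq> \<beta> \<Longrightarrow> lt \<gamma> \<beta>"
    using finite_mono_set_has_lt_max[of "Poly_Mapping.keys p"] \<open>p \<noteq> 0\<close> by auto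
  then have "is_lead_mono lt p \<beta>" unfolding is_lead_mono_def by blast
  then show False
    using lead_monos_ge_macaulay_iff[OF ps] p disjoint \<open>\<beta> \<in> Poly_Mapping.keys p\<close> by blast
qed

end

section \<open>The rows of \<open>M3H\<close>\<close>

definition m3h_lead_monos :: "(nat \<Rightarrow> nat) \<Rightarrow> nat \<Rightarrow> (mono \<Rightarrow> mono \<Rightarrow> bool) \<Rightarrow> (nat \<Rightarrow> 'a::field mpoly)
    \<Rightarrow> (nat \<Rightarrow> nat \<Rightarrow> int) \<Rightarrow> nat \<Rightarrow> (nat \<Rightarrow> int) \<Rightarrow> mono set" where
  "m3h_lead_monos n r lt f D k e =
     (let ms = dec_list lt (Mon n r e) in lead_monos_ge ms (macaulay ms (m3h_rows n r lt f D k e)))"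

definition m3h_new_monos :: "(nat \<Rightarrow> nat) \<Rightarrow> nat \<Rightarrow> (mono \<Rightarrow> mono \<Rightarrow> bool) \<Rightarrow> (nat \<Rightarrow> 'a::field mpoly)
    \<Rightarrow> (nat \<Rightarrow> nat \<Rightarrow> int) \<Rightarrow> nat \<Rightarrow> (nat \<Rightarrow> int) \<Rightarrow> mono list" where
  "m3h_new_monos n r lt f D k e =
     filter (\<lambda>\<beta>. \<beta> \<notin> m3h_lead_monos n r lt f D k (\<lambda>i. e i - D (Suc k) i))
       (dec_list lt (Mon n r (\<lambda>i. e i - D (Suc k) i)))"

lemma m3h_rows_Suc:
  "m3h_rows n r lt f D (Suc k) e =
     m3h_rows n r lt f D k e @
     map (\<lambda>\<beta>. Poly_Mapping.single \<beta> 1 * f (Suc k)) (m3h_new_monos n r lt f D k e)"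
  by (simp add: m3h_new_monos_def m3h_lead_monos_def Let_def)

context monomial_ordering
begin

lemma set_m3h_new_monos:
  "set (m3h_new_monos n r lt f D k e) =
     Mon n r (\<lambda>i. e i - D (Suc k) i) - m3h_lead_monos n r lt f D k (\<lambda>i. e i - D (Suc k) i)"
  unfolding m3h_new_monos_def using dec_list_Mon(1) by auto

lemma distinct_m3h_new_monos: "distinct (m3h_new_monos n r lt f D k e)"
  unfolding m3h_new_monos_def using dec_list_Mon(3) by simp

lemma m3h_rows_homog:
  assumes "\<forall>s\<in>{1..k}. homog n r (D s) (f s)"
  shows "\<forall>q\<in>set (m3h_rows n r lt f D k e). homog n r e q"
  using assms
proof (induction k arbitrary: e)
  case (Suc k)
  have old: "\<forall>q\<in>set (m3h_rows n r lt f D k e). homog n r e q"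
    using Suc.IH[of e] Suc.prems by simp
  have new: "homog n r e (Poly_Mapping.single \<beta> 1 * f (Suc k))"
    if "\<beta> \<in> set (m3h_new_monos n r lt f D k e)" for \<beta>
  proof -
    have "\<beta> \<in> Mon n r (\<lambda>i. e i - D (Suc k) i)" using that set_m3h_new_monos by blast
    moreover have "homog n r (D (Suc k)) (f (Suc k))" using Suc.prems by simp
    ultimately have "homog n r (\<lambda>i. (e i - D (Suc k) i) + D (Suc k) i)
        (Poly_Mapping.single \<beta> 1 * f (Suc k))"
      by (intro homog_mult homog_single)
    then show ?thesis by (rule homog_cong[rotated]) simp
  qed
  show ?case unfolding m3h_rows_Suc using old new by auto
qed simp

lemma m3h_rows_subset_ideal_deg: "set (m3h_rows n r lt f D k e) \<subseteq> ideal_deg n r f D k e"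
proof (induction k arbitrary: e)
  case (Suc k)
  have new: "Poly_Mapping.single \<beta> 1 * f (Suc k) \<in> ideal_deg n r f D (Suc k) e"
    if "\<beta> \<in> set (m3h_new_monos n r lt f D k e)" for \<beta>
  proof (rule mult_in_ideal_deg)
    have "\<beta> \<in> Mon n r (\<lambda>i. e i - D (Suc k) i)" using that set_m3h_new_monos by blast
    then show "homog n r (\<lambda>i. e i - D (Suc k) i) (Poly_Mapping.single \<beta> 1)" by (rule homog_single)
  qed simp
  have "set (m3h_rows n r lt f D k e) \<subseteq> ideal_deg n r f D (Suc k) e"
    using Suc.IH[of e] ideal_deg_mono_Suc by (rule subset_trans)
  then show ?case unfolding m3h_rows_Suc using new by auto
qed simp

lemma span_m3h_rows_subset_ideal_deg:
  "mpoly.span (set (m3h_rows n r lt f D k e)) \<subseteq> ideal_deg n r f D k e"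
  by (rule mpoly.span_minimal[OF m3h_rows_subset_ideal_deg subspace_ideal_deg])

lemma m3h_lead_monos_iff:
  assumes "\<forall>s\<in>{1..k}. homog n r (D s) (f s)"
  shows "\<beta> \<in> m3h_lead_monos n r lt f D k e \<longleftrightarrow>
    (\<exists>p\<in>mpoly.span (set (m3h_rows n r lt f D k e)). is_lead_mono lt p \<beta>)"
  unfolding m3h_lead_monos_def Let_def
  by (rule lead_monos_ge_macaulay_iff[OF m3h_rows_homog[OF assms]])

lemma span_m3h_rows_mono_Suc:
  "mpoly.span (set (m3h_rows n r lt f D k e)) \<subseteq> mpoly.span (set (m3h_rows n r lt f D (Suc k) e))"
  unfolding m3h_rows_Suc by (rule mpoly.span_mono) auto

text \<open>Induction along the monomial order: if the algorithm skips \<open>x\<^sup>\<beta> f\<^sub>k\<^sub>+\<^sub>1\<close>, some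
  \<open>q\<close> in the row space of degree \<open>e - D (k + 1)\<close> has leading monomial \<open>\<beta>\<close>; then
  \<open>q f\<^sub>k\<^sub>+\<^sub>1\<close> lies in the smaller ideal and \<open>x\<^sup>\<beta> - q/lc(q)\<close> involves only monomials below
  \<open>\<beta>\<close>.\<close>

lemma single_mult_in_span_m3h_rows:
  assumes f: "\<forall>s\<in>{1..Suc k}. homog n r (D s) (f s)"
    and IH: "ideal_deg n r f D k e \<subseteq> mpoly.span (set (m3h_rows n r lt f D k e))"
    and \<beta>: "\<beta> \<in> Mon n r (\<lambda>i. e i - D (Suc k) i)"
  shows "Poly_Mapping.single \<beta> 1 * f (Suc k) \<in> mpoly.span (set (m3h_rows n r lt f D (Suc k) e))"
proof -
  define e' where "e' = (\<lambda>i. e i - D (Suc k) i)"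
  let ?R = "mpoly.span (set (m3h_rows n r lt f D (Suc k) e))"
  have old: "ideal_deg n r f D k e \<subseteq> ?R"
    using IH span_m3h_rows_mono_Suc by (rule subset_trans)
  have f': "\<forall>s\<in>{1..k}. homog n r (D s) (f s)" using f by simp
  from \<beta>[folded e'_def] show ?thesis
  proof (induction rule: Mon_lt_induct)
    case (less \<beta>)
    show ?case
    proof (cases "\<beta> \<in> m3h_lead_monos n r lt f D k e'")
      case False
      then have "\<beta> \<in> set (m3h_new_monos n r lt f D k e)"
        using less.hyps set_m3h_new_monos unfolding e'_def by blast
      then show ?thesis unfolding m3h_rows_Suc by (intro mpoly.span_base) simp
    next
      case True
      then obtain q where q: "q \<in> mpoly.span (set (m3h_rows n r lt f D k e'))" "is_lead_mono lt q \<beta>"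
        using m3h_lead_monos_iff[OF f'] by blast
      define a where "a = Poly_Mapping.lookup q \<beta>"
      have "a \<noteq> 0" using q(2) unfolding a_def is_lead_mono_def by (simp add: in_keys_iff)
      define t where "t = Poly_Mapping.single \<beta> a - q"
      have "q \<in> ideal_deg n r f D k e'" using q(1) span_m3h_rows_subset_ideal_deg by blast
      then have "q * f (Suc k) \<in> ideal_deg n r f D k e"
        by (rule ideal_deg_mult) (use f in \<open>simp_all add: e'_def\<close>)
      then have q_part: "q * f (Suc k) \<in> ?R" using old by blast
      have "homog n r e' q" using homog_span[OF m3h_rows_homog[OF f'] q(1)] .
      then have "Poly_Mapping.single \<gamma> 1 * f (Suc k) \<in> ?R" if "\<gamma> \<in> Poly_Mapping.keys t" for \<gamma>
        using keys_lead_term_diff[OF q(2)] that less.IH unfolding t_def a_def homog_def by blast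
      then have t_part: "t * f (Suc k) \<in> ?R"
        unfolding mult_eq_sum_monomial_mult[of t] by (intro mpoly.span_sum mpoly.span_scale)
      have "t * f (Suc k) + q * f (Suc k) = Poly_Mapping.single \<beta> a * f (Suc k)"
        unfolding t_def by (simp add: algebra_simps)
      also have "\<dots> = smult a (Poly_Mapping.single \<beta> 1 * f (Suc k))"
        unfolding smult_def by (simp add: mult.assoc[symmetric] mult_single)
      finally have "Poly_Mapping.single \<beta> 1 * f (Suc k) =
          smult (1 / a) (t * f (Suc k) + q * f (Suc k))"
        using \<open>a \<noteq> 0\<close> by simp
      also have "\<dots> \<in> ?R" by (intro mpoly.span_scale mpoly.span_add t_part q_part)
      finally show ?thesis .
    qed
  qed
qed

lemma span_m3h_rows:
  assumes "\<forall>s\<in>{1..k}. homog n r (D s) (f s)"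
  shows "mpoly.span (set (m3h_rows n r lt f D k e)) = ideal_deg n r f D k e"
proof
  show "ideal_deg n r f D k e \<subseteq> mpoly.span (set (m3h_rows n r lt f D k e))"
    using assms
  proof (induction k arbitrary: e)
    case 0
    then show ?case by (simp add: ideal_deg_def mpoly.span_zero)
  next
    case (Suc k)
    have IH: "ideal_deg n r f D k e \<subseteq> mpoly.span (set (m3h_rows n r lt f D k e))"
      using Suc.IH[of e] Suc.prems by simp
    show ?case
    proof
      fix p assume "p \<in> ideal_deg n r f D (Suc k) e"
      then obtain q g where q: "q \<in> ideal_deg n r f D k e"
        and g: "homog n r (\<lambda>i. e i - D (Suc k) i) g" and p: "p = q + g * f (Suc k)"
        by (rule ideal_deg_SucE)
      have "q \<in> mpoly.span (set (m3h_rows n r lt f D (Suc k) e))"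
        using IH q span_m3h_rows_mono_Suc by blast
      moreover have
        "Poly_Mapping.single x 1 * f (Suc k) \<in> mpoly.span (set (m3h_rows n r lt f D (Suc k) e))"
        if "x \<in> Poly_Mapping.keys g" for x
        using single_mult_in_span_m3h_rows[OF Suc.prems IH] g that unfolding homog_def by blast
      then have "g * f (Suc k) \<in> mpoly.span (set (m3h_rows n r lt f D (Suc k) e))"
        unfolding mult_eq_sum_monomial_mult[of g] by (intro mpoly.span_sum mpoly.span_scale)
      ultimately show "p \<in> mpoly.span (set (m3h_rows n r lt f D (Suc k) e))"
        unfolding p by (rule mpoly.span_add)
    qed
  qed
qed (rule span_m3h_rows_subset_ideal_deg)

lemma m3h_new_rows_cofactor_eq_0:
  assumes f: "\<forall>s\<in>{1..Suc k}. homog n r (D s) (f s)" and H1: "H1_vanishes n r f D (Suc k) d"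
    and p: "p \<in> mpoly.span (set (m3h_rows n r lt f D k d))"
    and g: "Poly_Mapping.keys g \<subseteq> set (m3h_new_monos n r lt f D k d)"
    and syzygy: "p + g * f (Suc k) = 0"
  shows "g = 0"
proof -
  define e' where "e' = (\<lambda>i. d i - D (Suc k) i)"
  have f': "\<forall>s\<in>{1..k}. homog n r (D s) (f s)" using f by simp
  have "p \<in> ideal_deg n r f D k d" using p span_m3h_rows[OF f'] by blast
  then obtain h where h: "\<forall>s\<in>{1..k}. homog n r (\<lambda>i. d i - D s i) (h s)" "p = (\<Sum>s=1..k. h s * f s)"
    unfolding ideal_deg_def by blast
  have "homog n r e' g" using g set_m3h_new_monos unfolding homog_def e'_def by blast
  define G where "G = h(Suc k := g)"
  have "(\<Sum>l=1..k. G l * f l) = p" unfolding h(2) by (rule sum.cong) (auto simp: G_def)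
  then have "(\<Sum>l=1..Suc k. G l * f l) = 0" using syzygy by (simp add: G_def)
  moreover have "\<forall>l\<in>{1..Suc k}. homog n r (\<lambda>i. d i - D l i) (G l)"
    using h(1) \<open>homog n r e' g\<close> by (auto simp: G_def e'_def le_Suc_eq)
  ultimately have "G (Suc k) \<in> ideal_deg n r f D k e'"
    unfolding e'_def by (intro H1_vanishes_last_cofactor_in_ideal_deg[OF H1])
  then have "g \<in> mpoly.span (set (m3h_rows n r lt f D k e'))"
    using span_m3h_rows[OF f'] by (simp add: G_def)
  moreover have "Poly_Mapping.keys g \<inter> m3h_lead_monos n r lt f D k e' = {}"
    using g set_m3h_new_monos unfolding e'_def by blast
  ultimately show "g = 0"
    using span_eq_0_if_keys_disjoint_lead_monos[OF m3h_rows_homog[OF f']]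
    unfolding m3h_lead_monos_def Let_def by blast
qed

lemma m3h_rows_lin_indep:
  assumes "\<forall>s\<in>{1..k}. homog n r (D s) (f s)" and "\<forall>s\<in>{1..k}. H1_vanishes n r f D s d"
    and "list_comb c (m3h_rows n r lt f D k d) = 0"
  shows "\<forall>i<length (m3h_rows n r lt f D k d). c i = 0"
  using assms
proof (induction k arbitrary: c)
  case (Suc k)
  define R where "R = m3h_rows n r lt f D k d"
  define Bs where "Bs = m3h_new_monos n r lt f D k d"
  define c' where "c' = (\<lambda>j. c (length R + j))"
  define g where "g = list_comb c' (map (\<lambda>\<beta>. Poly_Mapping.single \<beta> 1) Bs)"
  have split: "list_comb c R + g * f (Suc k) = 0"
    using Suc.prems(3) unfolding m3h_rows_Suc list_comb_append list_comb_map_mult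
    by (simp add: R_def Bs_def c'_def g_def)
  have "Poly_Mapping.keys g \<subseteq> set Bs"
    using keys_list_comb[of c' "map (\<lambda>\<beta>. Poly_Mapping.single \<beta> 1) Bs"] by (auto simp: g_def)
  have "g = 0"
  proof (rule m3h_new_rows_cofactor_eq_0)
    show "list_comb c R \<in> mpoly.span (set (m3h_rows n r lt f D k d))"
      unfolding R_def by (rule list_comb_in_span)
    show "Poly_Mapping.keys g \<subseteq> set (m3h_new_monos n r lt f D k d)"
      using \<open>Poly_Mapping.keys g \<subseteq> set Bs\<close> by (simp add: Bs_def)
  qed (use Suc.prems split in simp_all)
  then have new: "c' j = 0" if "j < length Bs" for j
    using lookup_list_comb_monomials[OF distinct_m3h_new_monos[of f D k d, folded Bs_def] that,
        where c = c']
      \<open>g = 0\<close> by (simp add: g_def)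
  have "list_comb c R = 0" using split \<open>g = 0\<close> by simp
  then have old: "\<forall>i<length R. c i = 0" using Suc.IH[of c] Suc.prems(1,2) by (simp add: R_def)
  show ?case
  proof (intro allI impI)
    fix i assume "i < length (m3h_rows n r lt f D (Suc k) d)"
    then have "i < length R + length Bs" unfolding m3h_rows_Suc R_def Bs_def by simp
    then show "c i = 0"
      using old new[of "i - length R"] by (cases "i < length R") (simp_all add: c'_def)
  qed
qed simp

end

theorem mainTheorem20:
  fixes n :: "nat \<Rightarrow> nat" and r :: nat
    and f :: "nat \<Rightarrow> 'a::field_char_0 mpoly"
    and D :: "nat \<Rightarrow> nat \<Rightarrow> int"
    and k :: nat and d :: "nat \<Rightarrow> int"
    and lt :: "mono \<Rightarrow> mono \<Rightarrow> bool"
  assumes "monomial_order n r lt"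
    and "\<forall>s\<in>{1..k}. homog n r (D s) (f s)"
    and "\<forall>s\<in>{1..k}. H1_vanishes n r f D s d"
  shows "full_rank (M3H n r lt f D k d)"
proof -
  interpret monomial_ordering n r lt by unfold_locales (rule assms(1))
  show ?thesis unfolding M3H_def
  proof (rule full_rank_macaulay)
    show "Poly_Mapping.keys p \<subseteq> set (dec_list lt (Mon n r d))"
      if "p \<in> set (m3h_rows n r lt f D k d)" for p
      using m3h_rows_homog[OF assms(2)] that dec_list_Mon(1) unfolding homog_def by blast
    show "\<forall>i<length (m3h_rows n r lt f D k d). c i = 0"
      if "list_comb c (m3h_rows n r lt f D k d) = 0" for c
      using m3h_rows_lin_indep[OF assms(2,3) that] .
  qed
qed

end
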